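(* Let $n,d$ be positive integers, $\mathbf{c}\in\mathbb{Z}^n_+$, and $\mathbb{P}\subseteq[0,d]^n$ a bounded polyhedron with $\mathbb{P}\cap\mathbb{Z}^n\ne\emptyset$, and consider the lexicographic integer program of finding a lexicographically maximum element of $\mathbb{S}=\{(\mathbf{c}^\top\mathbf{x},x_1,\dots,x_n):\mathbf{x}\in\mathbb{P}\cap\mathbb{Z}^n\}$ (equivalently, an optimal solution of $\max\{\mathbf{c}^\top\mathbf{x}:\mathbf{x}\in\mathbb{P}\cap\mathbb{Z}^n\}$, ties broken lexicographically). Let $a_1=d$ and $a_k=d(1+\sum_{j=1}^{k-1}a_j)$ for $k\in\{2,\dots,n\}$. Consider the cutting plane algorithm: set $L_0=\{\mathbf{z}\in\mathbb{R}^{n+1}:(z_1,\dots,z_n)\in\mathbb{P},\ z_0=\sum_i c_iz_i\}$; at iteration $t=0,1,2,\dots$ let $\mathbf{z}_t^\star$ be a lexicographically maximum element of $L_t$; if $\mathbf{z}_t^\star$ is integral, stop and output it; otherwise generate the $n+1$ cuts $z_i+\sum_{j=0}^{i-1}a_{i-j}(z_j-\lceil(\mathbf{z}_t^\star)_j\rceil)\le\lfloor(\mathbf{z}_t^\star)_i\rfloor$, $i\in\{0,\dots,n\}$, select the cut with index $k=\min\{j:(\mathbf{z}_t^\star)_j\notin\mathbb{Z}\}$, and let $L_{t+1}$ be $L_t$ intersected with the half-space defined by that cut. Then this algorithm terminates after a finite number of iterations and outputs an optimal solution of the lexicographic integer program, i.e., a lexicographically maximum element of $\mathbb{S}$.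
   Context: Lexicographic order on $\mathbb{R}^{n+1}$: $\mathbf{x}<_L\mathbf{y}$ if there is $k\in\{0,\dots,n\}$ with $x_k<y_k$ and $x_i=y_i$ for all $i<k$; $\mathbf{x}\le_L\mathbf{y}$ means $\mathbf{x}<_L\mathbf{y}$ or $\mathbf{x}=\mathbf{y}$. A lexicographically maximum element of a set $T$ is some $\mathbf{t}\in T$ with $\mathbf{s}\le_L\mathbf{t}$ for all $\mathbf{s}\in T$. The rule of selecting the cut whose index is the first non-integral coordinate of the current LP solution is the paper's standing assumption on the learned cut selection policy (HEM/HEM++). *)

theory Defs
  imports Main Complex_Main
begin

text \<open>Vectors of R^(n+1) are represented as functions nat => real indexed by 0..n
  (zero outside); vectors of R^n as functions indexed by 1..n (zero outside).\<close>

definition supp_in :: "nat set \<Rightarrow> (nat \<Rightarrow> real) \<Rightarrow> bool" where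
  "supp_in I x \<longleftrightarrow> (\<forall>i. i \<notin> I \<longrightarrow> x i = 0)"

definition lex_less :: "nat \<Rightarrow> (nat \<Rightarrow> real) \<Rightarrow> (nat \<Rightarrow> real) \<Rightarrow> bool" where
  "lex_less n x y \<longleftrightarrow> (\<exists>k\<le>n. x k < y k \<and> (\<forall>i<k. x i = y i))"

definition lex_le :: "nat \<Rightarrow> (nat \<Rightarrow> real) \<Rightarrow> (nat \<Rightarrow> real) \<Rightarrow> bool" where
  "lex_le n x y \<longleftrightarrow> lex_less n x y \<or> x = y"

definition is_lexmax :: "nat \<Rightarrow> (nat \<Rightarrow> real) set \<Rightarrow> (nat \<Rightarrow> real) \<Rightarrow> bool" where
  "is_lexmax n T t \<longleftrightarrow> t \<in> T \<and> (\<forall>s\<in>T. lex_le n s t)"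

definition lexmax :: "nat \<Rightarrow> (nat \<Rightarrow> real) set \<Rightarrow> (nat \<Rightarrow> real)" where
  "lexmax n T = (THE t. is_lexmax n T t)"

definition integral_vec :: "nat \<Rightarrow> (nat \<Rightarrow> real) \<Rightarrow> bool" where
  "integral_vec n z \<longleftrightarrow> (\<forall>i\<le>n. z i \<in> \<int>)"

definition polyhedron :: "nat \<Rightarrow> nat \<Rightarrow> (nat \<Rightarrow> nat \<Rightarrow> real) \<Rightarrow> (nat \<Rightarrow> real) \<Rightarrow> (nat \<Rightarrow> real) set" where
  "polyhedron n m A b = {x. supp_in {1..n} x \<and> (\<forall>r<m. (\<Sum>j=1..n. A r j * x j) \<le> b r)}"

definition objval :: "nat \<Rightarrow> (nat \<Rightarrow> int) \<Rightarrow> (nat \<Rightarrow> real) \<Rightarrow> real" where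
  "objval n c x = (\<Sum>i=1..n. real_of_int (c i) * x i)"

definition lexIP_set :: "nat \<Rightarrow> (nat \<Rightarrow> int) \<Rightarrow> (nat \<Rightarrow> real) set \<Rightarrow> (nat \<Rightarrow> real) set" where
  "lexIP_set n c P = {x(0 := objval n c x) | x. x \<in> P \<and> (\<forall>j. x j \<in> \<int>)}"

definition L0 :: "nat \<Rightarrow> (nat \<Rightarrow> int) \<Rightarrow> (nat \<Rightarrow> real) set \<Rightarrow> (nat \<Rightarrow> real) set" where
  "L0 n c P = {z. supp_in {0..n} z \<and> z(0 := 0) \<in> P \<and> z 0 = objval n c z}"

definition cut :: "(nat \<Rightarrow> int) \<Rightarrow> (nat \<Rightarrow> real) \<Rightarrow> nat \<Rightarrow> (nat \<Rightarrow> real) set" where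
  "cut a zs i = {z. z i + (\<Sum>j<i. real_of_int (a (i - j)) * (z j - real_of_int \<lceil>zs j\<rceil>))
                    \<le> real_of_int \<lfloor>zs i\<rfloor>}"

definition first_frac :: "(nat \<Rightarrow> real) \<Rightarrow> nat" where
  "first_frac z = (LEAST j. z j \<notin> \<int>)"

primrec Lseq :: "nat \<Rightarrow> (nat \<Rightarrow> int) \<Rightarrow> (nat \<Rightarrow> int) \<Rightarrow> (nat \<Rightarrow> real) set \<Rightarrow> nat \<Rightarrow> (nat \<Rightarrow> real) set" where
  "Lseq n c a P 0 = L0 n c P"
| "Lseq n c a P (Suc t) =
     (let z = lexmax n (Lseq n c a P t) in
      if integral_vec n z then Lseq n c a P t
      else Lseq n c a P t \<inter> cut a z (first_frac z))"

end

theory Submission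
  imports Defs "HOL-Analysis.Function_Topology"
begin

text \<open>Write \<open>z\<^sub>t\<close> for the lexicographic maximum of \<open>L\<^sub>t\<close> and \<open>S\<close> for the lifted integer
  points of \<open>P\<close>. The cut selected at a fractional \<open>z\<^sub>t\<close> is valid for every integral \<open>y\<close> of \<open>L\<^sub>0\<close>
  with \<open>y \<le>\<^sub>L z\<^sub>t\<close>: if \<open>y\<close> first drops below \<open>z\<^sub>t\<close> at an index \<open>j\<^sub>0\<close> before the first
  fractional index \<open>k\<close>, the weight \<open>a\<^bsub>k-j\<^sub>0\<^esub>\<close> of that unit deficit exceeds everything the
  coordinates strictly between \<open>j\<^sub>0\<close> and \<open>k\<close> can contribute, as they lie in \<open>[0,d]\<close>. Hence every
  \<open>L\<^sub>t\<close> is a compact set containing \<open>S\<close>, so \<open>z\<^sub>t\<close> exists, dominates \<open>S\<close>, and the sequence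
  \<open>z\<^sub>t\<close> is lexicographically nonincreasing. Its coordinates then settle one at a time: once the
  first \<open>i\<close> of them are constant and integral, every later fractional \<open>(z\<^sub>t)\<^sub>i\<close> is the first
  fractional coordinate, and the cut at index \<open>i\<close> strictly lowers the integer \<open>\<lceil>(z\<^sub>t)\<^sub>i\<rceil>\<close>,
  which is bounded below. So some \<open>z\<^sub>t\<close> is integral; it then lies in \<open>S\<close> and is its
  lexicographic maximum.\<close>

section \<open>Lexicographic maxima of compact sets\<close>

lemma lex_less_asym: "lex_less n x y \<Longrightarrow> \<not> lex_less n y x"
  unfolding lex_less_def by (metis linorder_neqE_nat not_less_iff_gr_or_eq)

lemma lexmax_eqI: "is_lexmax n T t \<Longrightarrow> lexmax n T = t"
  unfolding lexmax_def
  by (rule the_equality) (metis is_lexmax_def lex_le_def lex_less_asym)+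

lemma lex_le_coord_le:
  assumes "lex_le n y z" and "\<forall>j<i. y j = z j"
  shows "y i \<le> z i"
proof (cases "y = z")
  case False
  then obtain k where k: "y k < z k" "\<forall>j<k. y j = z j"
    using assms(1) unfolding lex_le_def lex_less_def by blast
  then show ?thesis
  proof (cases k i rule: linorder_cases)
    case less
    then show ?thesis
      using k assms(2) by force
  qed simp_all
qed simp

primrec lex_layers :: "(nat \<Rightarrow> real) set \<Rightarrow> nat \<Rightarrow> (nat \<Rightarrow> real) set" where
  "lex_layers K 0 = K"
| "lex_layers K (Suc i) = {z \<in> lex_layers K i. \<forall>w\<in>lex_layers K i. w i \<le> z i}"

lemma compact_coordinate_maximizers:
  fixes K :: "(nat \<Rightarrow> real) set"
  assumes "compact K" "K \<noteq> {}"
  shows "compact {z \<in> K. \<forall>w\<in>K. w i \<le> z i} \<and> {z \<in> K. \<forall>w\<in>K. w i \<le> z i} \<noteq> {}"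
proof -
  have "compact ((\<lambda>z. z i) ` K)"
    using assms(1)
    by (intro compact_continuous_image continuous_on_subset[OF continuous_on_product_coordinates])
      auto
  then obtain s where "s \<in> (\<lambda>z. z i) ` K" "\<forall>t\<in>(\<lambda>z. z i) ` K. t \<le> s"
    using compact_attains_sup assms(2) by (metis image_is_empty)
  then obtain z0 where z0: "z0 \<in> K" "\<forall>w\<in>K. w i \<le> z0 i" by auto
  then have eq: "{z \<in> K. \<forall>w\<in>K. w i \<le> z i} = K \<inter> {z. z0 i \<le> z i}"
    by force
  have "closed {z :: nat \<Rightarrow> real. z0 i \<le> z i}"
    by (intro closed_Collect_le continuous_on_const continuous_on_product_coordinates)
  then show ?thesis
    unfolding eq using assms(1) z0 compact_Int_closed by blast
qed

lemma compact_lex_layers: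
  assumes "compact K" "K \<noteq> {}"
  shows "compact (lex_layers K i) \<and> lex_layers K i \<noteq> {}"
proof (induction i)
  case (Suc i)
  then show ?case
    using compact_coordinate_maximizers[of "lex_layers K i" i] by simp
qed (simp add: assms)

lemma lex_layers_antimono: "j \<le> i \<Longrightarrow> lex_layers K i \<subseteq> lex_layers K j"
  by (induction i) (auto simp: le_Suc_eq)

lemma lex_layers_prefix:
  assumes "z \<in> lex_layers K i" "s \<in> K" "\<forall>j<i. s j = z j"
  shows "s \<in> lex_layers K i"
  using assms
proof (induction i)
  case (Suc i)
  then have "s \<in> lex_layers K i" by simp
  then show ?case using Suc.prems by simp
qed simp

lemma lexmax_exists:
  assumes "compact K" "K \<noteq> {}" "\<forall>z\<in>K. supp_in {0..n} z"
  shows "\<exists>z. is_lexmax n K z"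
proof -
  obtain z where z: "z \<in> lex_layers K (Suc n)"
    using compact_lex_layers[OF assms(1,2)] by blast
  then have zK: "z \<in> K"
    using lex_layers_antimono[of 0 "Suc n" K] by auto
  have "lex_less n s z" if sK: "s \<in> K" and "s \<noteq> z" for s
  proof -
    define i where "i = (LEAST i. s i \<noteq> z i)"
    have ne: "s i \<noteq> z i"
      unfolding i_def by (rule LeastI_ex) (use \<open>s \<noteq> z\<close> in auto)
    have prefix: "\<forall>j<i. s j = z j"
      unfolding i_def using not_less_Least by blast
    have "i \<le> n"
    proof (rule ccontr)
      assume "\<not> i \<le> n"
      then have "s i = 0" "z i = 0"
        using assms(3) sK zK unfolding supp_in_def by auto
      with ne show False
        by simp
    qed
    then have zi: "z \<in> lex_layers K (Suc i)"
      using lex_layers_antimono[of "Suc i" "Suc n" K] z by auto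
    then have "s \<in> lex_layers K i"
      using lex_layers_prefix[of z K i s] sK prefix by simp
    then have "s i < z i"
      using zi ne by fastforce
    then show ?thesis
      using prefix \<open>i \<le> n\<close> unfolding lex_less_def by blast
  qed
  then show ?thesis
    using zK unfolding is_lexmax_def lex_le_def by blast
qed

lemma is_lexmax_lexmax:
  assumes "compact K" "K \<noteq> {}" "\<forall>z\<in>K. supp_in {0..n} z"
  shows "is_lexmax n K (lexmax n K)"
  using lexmax_exists[OF assms] lexmax_eqI by metis

section \<open>Validity of the cuts\<close>

lemma of_int_ceiling_Ints: "x \<in> \<int> \<Longrightarrow> of_int \<lceil>x\<rceil> = (x :: 'a :: floor_ceiling)"
  by (erule Ints_cases) simp

lemma Ints_le_floor: "y \<in> \<int> \<Longrightarrow> y \<le> x \<Longrightarrow> y \<le> of_int \<lfloor>x :: 'a :: floor_ceiling\<rfloor>"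
  by (erule Ints_cases) (simp add: le_floor_iff)

lemma first_frac_eqI: "z i \<notin> \<int> \<Longrightarrow> \<forall>j<i. z j \<in> \<int> \<Longrightarrow> first_frac z = i"
  unfolding first_frac_def by (rule Least_equality) (auto intro: leI)

lemma first_frac_nonintegral:
  assumes "\<not> integral_vec n z"
  shows "first_frac z \<le> n" "z (first_frac z) \<notin> \<int>" "\<forall>j<first_frac z. z j \<in> \<int>"
proof -
  obtain i where i: "i \<le> n" "z i \<notin> \<int>"
    using assms unfolding integral_vec_def by auto
  show "first_frac z \<le> n"
    using Least_le[of "\<lambda>j. z j \<notin> \<int>" i] i unfolding first_frac_def by simp
  show "z (first_frac z) \<notin> \<int>"
    unfolding first_frac_def by (rule LeastI) (rule i(2))
  show "\<forall>j<first_frac z. z j \<in> \<int>"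
    unfolding first_frac_def using not_less_Least by blast
qed

lemma mem_cut_iff_floor:
  assumes "\<forall>j<i. w j = of_int \<lceil>z j\<rceil>"
  shows "w \<in> cut a z i \<longleftrightarrow> w i \<le> of_int \<lfloor>z i\<rfloor>"
  using assms by (simp add: cut_def)

lemma cut_weights_nonneg:
  fixes a :: "nat \<Rightarrow> int"
  assumes rec: "\<forall>m\<in>{1..n}. a m = int d * (1 + (\<Sum>l=1..m-1. a l))"
  shows "m \<in> {1..n} \<Longrightarrow> 0 \<le> a m"
proof (induction m rule: less_induct)
  case (less m)
  have "0 \<le> (\<Sum>l=1..m-1. a l)"
    using less by (intro sum_nonneg) auto
  then show ?case
    using rec less.prems by simp
qed

lemma cut_weights_dominate:
  fixes a :: "nat \<Rightarrow> int" and u :: "nat \<Rightarrow> real"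
  assumes rec: "\<forall>m\<in>{1..n}. a m = int d * (1 + (\<Sum>l=1..m-1. a l))"
    and "k \<le> n" "j0 < k"
    and before: "\<forall>j<j0. u j = 0" and deficit: "u j0 \<le> -1" and after: "\<forall>j\<in>{j0<..<k}. u j \<le> d"
  shows "(\<Sum>j<k. of_int (a (k - j)) * u j) \<le> - real d"
proof -
  have a_nonneg: "0 \<le> a (k - j)" if "j < k" for j
  proof -
    have "k - j \<in> {1..n}"
      using that \<open>k \<le> n\<close> by auto
    then show ?thesis
      using cut_weights_nonneg[OF rec] by blast
  qed
  have parts: "{..<k} = {..<j0} \<union> insert j0 {j0<..<k}"
    using \<open>j0 < k\<close> by auto
  have reflect: "(\<Sum>j\<in>{j0<..<k}. a (k - j)) = (\<Sum>l=1..k-j0-1. a l)"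
    by (rule sum.reindex_bij_witness[of _ "\<lambda>l. k - l" "\<lambda>j. k - j"]) auto
  have "k - j0 \<in> {1..n}"
    using \<open>j0 < k\<close> \<open>k \<le> n\<close> by auto
  then have a_k: "of_int (a (k - j0)) = real d * (1 + of_int (\<Sum>l=1..k-j0-1. a l))"
    using rec by simp
  have "(\<Sum>j<k. of_int (a (k - j)) * u j)
      = (\<Sum>j<j0. of_int (a (k - j)) * u j) + of_int (a (k - j0)) * u j0
        + (\<Sum>j\<in>{j0<..<k}. of_int (a (k - j)) * u j)"
    unfolding parts by (subst sum.union_disjoint) auto
  also have "\<dots> \<le> 0 + of_int (a (k - j0)) * (-1) + (\<Sum>j\<in>{j0<..<k}. of_int (a (k - j)) * real d)"
    using before deficit after a_nonneg \<open>j0 < k\<close>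
    by (intro add_mono mult_left_mono sum_mono) auto
  also have "(\<Sum>j\<in>{j0<..<k}. of_int (a (k - j)) * real d) = of_int (\<Sum>l=1..k-j0-1. a l) * real d"
    unfolding reflect[symmetric] by (simp add: sum_distrib_right)
  finally show ?thesis
    unfolding a_k by (simp add: algebra_simps)
qed

lemma integral_point_in_cut:
  fixes a :: "nat \<Rightarrow> int" and y z :: "nat \<Rightarrow> real"
  assumes rec: "\<forall>m\<in>{1..n}. a m = int d * (1 + (\<Sum>l=1..m-1. a l))"
    and y_int: "integral_vec n y" and y_le: "\<forall>j\<in>{1..n}. y j \<le> d"
    and z_ge: "\<forall>j\<in>{1..n}. 0 \<le> z j"
    and lex: "lex_le n y z" and z_frac: "\<not> integral_vec n z"
  shows "y \<in> cut a z (first_frac z)"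
proof -
  define k where "k = first_frac z"
  have "k \<le> n" "z k \<notin> \<int>" and z_int: "\<forall>j<k. z j \<in> \<int>"
    using first_frac_nonintegral[OF z_frac] unfolding k_def by auto
  then have "y \<noteq> z"
    using y_int unfolding integral_vec_def by auto
  then obtain j0 where "j0 \<le> n" "y j0 < z j0" and agree: "\<forall>j<j0. y j = z j"
    using lex unfolding lex_le_def lex_less_def by blast
  have ceil_z: "of_int \<lceil>z j\<rceil> = z j" if "j < k" for j
    using z_int that by (simp add: of_int_ceiling_Ints)
  show ?thesis
  proof (cases "k \<le> j0")
    case True
    have "y k \<le> z k"
      using True agree \<open>y j0 < z j0\<close> by (cases "k = j0") auto
    then have "y k \<le> of_int \<lfloor>z k\<rfloor>"
      using y_int \<open>k \<le> n\<close> Ints_le_floor unfolding integral_vec_def by blast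
    moreover have "\<forall>j<k. y j = of_int \<lceil>z j\<rceil>"
      using True agree by (auto simp: ceil_z)
    ultimately show ?thesis
      unfolding k_def[symmetric] using mem_cut_iff_floor by blast
  next
    case False
    define u where "u j = y j - of_int \<lceil>z j\<rceil>" for j
    have "(\<Sum>j<k. of_int (a (k - j)) * u j) \<le> - real d"
    proof (rule cut_weights_dominate[OF rec \<open>k \<le> n\<close>])
      show "j0 < k" using False by simp
      show "\<forall>j<j0. u j = 0"
        using agree False by (auto simp: u_def ceil_z)
      have "y j0 \<in> \<int>" "z j0 \<in> \<int>"
        using y_int \<open>j0 \<le> n\<close> z_int False unfolding integral_vec_def by auto
      then show "u j0 \<le> -1"
        using \<open>y j0 < z j0\<close> ceil_z False unfolding u_def
        by (elim Ints_cases) simp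
      show "\<forall>j\<in>{j0<..<k}. u j \<le> d"
      proof
        fix j assume "j \<in> {j0<..<k}"
        then have "j \<in> {1..n}" "j < k"
          using \<open>k \<le> n\<close> by auto
        then have "y j \<le> d" "0 \<le> z j" "of_int \<lceil>z j\<rceil> = z j"
          using y_le z_ge ceil_z by auto
        then show "u j \<le> d"
          unfolding u_def by linarith
      qed
    qed
    moreover have "y k \<le> d" "0 \<le> real_of_int \<lfloor>z k\<rfloor>"
      using y_le z_ge False \<open>k \<le> n\<close> by auto
    ultimately have "y k + (\<Sum>j<k. of_int (a (k - j)) * u j) \<le> of_int \<lfloor>z k\<rfloor>"
      by linarith
    then show ?thesis
      unfolding cut_def k_def u_def by simp
  qed
qed

section \<open>Termination of lexicographically descending cut sequences\<close>

lemma decreasing_int_seq_eventually_const: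
  fixes f :: "nat \<Rightarrow> int"
  assumes dec: "\<forall>t\<ge>T. f (Suc t) \<le> f t" and lower: "\<forall>t. lo \<le> f t"
  shows "\<exists>T'\<ge>T. \<forall>t\<ge>T'. f t = f T'"
proof -
  obtain T' where T': "T' \<ge> T" and minimal: "\<forall>t\<ge>T. nat (f T' - lo) \<le> nat (f t - lo)"
    using ex_has_least_nat[of "\<lambda>t. t \<ge> T" T "\<lambda>t. nat (f t - lo)"] by auto
  have "f t \<le> f T'" if "T' \<le> t" for t
    using that
  proof (induction t rule: dec_induct)
    case (step t)
    then have "f (Suc t) \<le> f t"
      using dec T' by simp
    then show ?case
      using step.IH by simp
  qed simp
  moreover have "f T' \<le> f t" if "T' \<le> t" for t
  proof -
    have "nat (f T' - lo) \<le> nat (f t - lo)"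
      using minimal T' that by simp
    then show ?thesis
      using lower by (simp add: nat_le_eq_zle)
  qed
  ultimately show ?thesis
    using T' by (meson order_antisym)
qed

lemma mem_cut_le_floor:
  assumes "w \<in> cut a z i" and "\<forall>j<i. w j = z j \<and> z j \<in> \<int>"
  shows "w i \<le> of_int \<lfloor>z i\<rfloor>"
proof -
  have "\<forall>j<i. w j = of_int \<lceil>z j\<rceil>"
  proof (intro allI impI)
    fix j assume "j < i"
    with assms(2) show "w j = of_int \<lceil>z j\<rceil>"
      by (simp add: of_int_ceiling_Ints)
  qed
  then show ?thesis
    using assms(1) mem_cut_iff_floor by blast
qed

lemma cut_sequence_settles_next_coord:
  fixes zs :: "nat \<Rightarrow> nat \<Rightarrow> real"
  assumes descent: "\<And>t. lex_le n (zs (Suc t)) (zs t)"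
    and cuts: "\<And>t. zs (Suc t) \<in> cut a (zs t) (first_frac (zs t))"
    and lower: "\<And>t. lo \<le> zs t i"
    and settled: "\<forall>t\<ge>T. \<forall>j<i. zs t j = zs T j \<and> zs T j \<in> \<int>"
  shows "\<exists>T'. \<forall>t\<ge>T'. \<forall>j<Suc i. zs t j = zs T' j \<and> zs T' j \<in> \<int>"
proof -
  have settled_from: "zs t j = zs T j \<and> zs T j \<in> \<int>" if "T \<le> t" "j < i" for t j
    using settled that by blast
  have prefix: "\<forall>j<i. zs (Suc t) j = zs t j \<and> zs t j \<in> \<int>" if "T \<le> t" for t
    using settled_from[of t] settled_from[of "Suc t"] that by simp
  define f where "f t = \<lceil>zs t i\<rceil>" for t
  have "\<forall>t\<ge>T. f (Suc t) \<le> f t"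
  proof (intro allI impI)
    fix t assume "T \<le> t"
    then have "\<forall>j<i. zs (Suc t) j = zs t j"
      using prefix by simp
    then have "zs (Suc t) i \<le> zs t i"
      by (rule lex_le_coord_le[OF descent])
    then show "f (Suc t) \<le> f t"
      unfolding f_def by (rule ceiling_mono)
  qed
  moreover have "\<forall>t. \<lceil>lo\<rceil> \<le> f t"
    using lower unfolding f_def by (simp add: ceiling_mono)
  ultimately obtain T' where "T \<le> T'" and const: "\<And>t. T' \<le> t \<Longrightarrow> f t = f T'"
    using decreasing_int_seq_eventually_const[where f = f] by blast
  have int: "zs t i \<in> \<int>" if "T' \<le> t" for t
  proof (rule ccontr)
    assume frac: "zs t i \<notin> \<int>"
    have settled_t: "\<forall>j<i. zs (Suc t) j = zs t j \<and> zs t j \<in> \<int>"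
      using prefix \<open>T \<le> T'\<close> that by simp
    then have "first_frac (zs t) = i"
      using frac by (intro first_frac_eqI) auto
    then have "zs (Suc t) i \<le> of_int \<lfloor>zs t i\<rfloor>"
      using mem_cut_le_floor cuts[of t] settled_t by simp
    then have "f (Suc t) \<le> \<lfloor>zs t i\<rfloor>"
      unfolding f_def by (simp add: ceiling_le_iff)
    moreover have "zs t i \<noteq> of_int \<lfloor>zs t i\<rfloor>"
      using frac Ints_of_int by metis
    then have "f t = \<lfloor>zs t i\<rfloor> + 1"
      unfolding f_def by (simp add: ceiling_altdef)
    moreover have "f (Suc t) = f t"
      using const[of t] const[of "Suc t"] that by simp
    ultimately show False
      by linarith
  qed
  have "zs t i = zs T' i" if "T' \<le> t" for t
  proof -
    have "zs t i = of_int (f t)" "zs T' i = of_int (f T')"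
      using int[OF that] int[of T'] unfolding f_def by (simp_all add: of_int_ceiling_Ints)
    then show ?thesis
      using const[OF that] by simp
  qed
  moreover have "zs t j = zs T' j \<and> zs T' j \<in> \<int>" if "T' \<le> t" "j < i" for t j
    using settled_from[of t j] settled_from[of T' j] \<open>T \<le> T'\<close> that by simp
  ultimately show ?thesis
    using int by (metis less_Suc_eq order_refl)
qed

lemma cut_sequence_reaches_integral:
  fixes zs :: "nat \<Rightarrow> nat \<Rightarrow> real"
  assumes descent: "\<And>t. lex_le n (zs (Suc t)) (zs t)"
    and cuts: "\<And>t. zs (Suc t) \<in> cut a (zs t) (first_frac (zs t))"
    and lower: "\<And>t i. i \<le> n \<Longrightarrow> lo \<le> zs t i"
  shows "\<exists>t. integral_vec n (zs t)"
proof -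
  have "\<exists>T. \<forall>t\<ge>T. \<forall>j<i. zs t j = zs T j \<and> zs T j \<in> \<int>" if "i \<le> Suc n" for i
    using that
  proof (induction i)
    case (Suc i)
    then obtain T where "\<forall>t\<ge>T. \<forall>j<i. zs t j = zs T j \<and> zs T j \<in> \<int>"
      by auto
    moreover have "\<And>t. lo \<le> zs t i"
      using lower Suc.prems by simp
    ultimately show ?case
      using cut_sequence_settles_next_coord[where zs = zs, OF descent cuts] by blast
  qed simp
  then obtain T where "\<forall>j<Suc n. zs T j \<in> \<int>"
    by blast
  then have "integral_vec n (zs T)"
    unfolding integral_vec_def by (simp add: less_Suc_eq_le)
  then show ?thesis ..
qed

section \<open>The relaxations\<close>

lemma compact_box:
  fixes K :: "'a \<Rightarrow> 'b :: topological_space set"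
  assumes "\<And>i. compact (K i)"
  shows "compact {z. \<forall>i. z i \<in> K i}"
proof -
  have "compactin (product_topology (\<lambda>i. euclidean) UNIV) (PiE UNIV K)"
    using assms by (simp add: compactin_PiE compactin_euclidean_iff)
  moreover have "PiE UNIV K = {z. \<forall>i. z i \<in> K i}"
    by (auto simp: PiE_def Pi_def)
  ultimately show ?thesis
    by (simp add: euclidean_product_topology compactin_euclidean_iff)
qed

lemma closed_supp_in: "closed {z :: nat \<Rightarrow> real. supp_in I z}"
proof -
  have "{z :: nat \<Rightarrow> real. supp_in I z} = (\<Inter>i\<in>-I. (\<lambda>z. z i) -` {0})"
    unfolding supp_in_def by auto
  then show ?thesis
    by (simp add: closed_INT closed_vimage)
qed

lemma closed_polyhedron: "closed (polyhedron n m A b)"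
proof -
  have "polyhedron n m A b
      = {x. supp_in {1..n} x} \<inter> (\<Inter>r\<in>{..<m}. {x. (\<Sum>j=1..n. A r j * x j) \<le> b r})"
    unfolding polyhedron_def by auto
  then show ?thesis
    by (simp add: closed_supp_in closed_Int closed_INT closed_Collect_le continuous_intros)
qed

lemma closed_L0: "closed P \<Longrightarrow> closed (L0 n c P)"
proof -
  assume "closed P"
  have "continuous_on UNIV (\<lambda>z :: nat \<Rightarrow> real. z(0 := 0))"
  proof (intro continuous_on_coordinatewise_then_product)
    fix i
    show "continuous_on UNIV (\<lambda>z :: nat \<Rightarrow> real. (z(0 := 0)) i)"
      by (cases "i = 0") simp_all
  qed
  then have "closed ((\<lambda>z. z(0 := 0)) -` P)"
    using \<open>closed P\<close> by (rule closed_vimage[rotated])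
  moreover have "closed {z :: nat \<Rightarrow> real. z 0 = objval n c z}"
    unfolding objval_def
    by (intro closed_Collect_eq continuous_intros continuous_on_product_coordinates)
  moreover have
    "L0 n c P = {z. supp_in {0..n} z} \<inter> (\<lambda>z. z(0 := 0)) -` P \<inter> {z. z 0 = objval n c z}"
    unfolding L0_def by auto
  ultimately show ?thesis
    by (simp add: closed_Int closed_supp_in)
qed

lemma closed_cut: "closed (cut a z i)"
  unfolding cut_def
  by (intro closed_Collect_le continuous_intros continuous_on_product_coordinates)

lemma Lseq_Suc_subset: "Lseq n c a P (Suc t) \<subseteq> Lseq n c a P t"
  by (auto simp: Let_def)

lemma Lseq_subset_L0: "Lseq n c a P t \<subseteq> L0 n c P"
proof (induction t)
  case (Suc t)
  then show ?case
    using Lseq_Suc_subset[of n c a P t] by blast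
qed simp

lemma compact_Lseq: "compact (L0 n c P) \<Longrightarrow> compact (Lseq n c a P t)"
  by (induction t) (auto simp: Let_def closed_cut compact_Int_closed)

lemma lexIP_set_integral: "s \<in> lexIP_set n c P \<Longrightarrow> integral_vec n s"
  unfolding lexIP_set_def integral_vec_def objval_def by (auto intro!: Ints_sum Ints_mult)

lemma lexIP_set_subset_L0:
  assumes "\<forall>x\<in>P. supp_in {1..n} x"
  shows "lexIP_set n c P \<subseteq> L0 n c P"
proof
  fix s assume "s \<in> lexIP_set n c P"
  then obtain x where s: "s = x(0 := objval n c x)" and "x \<in> P"
    unfolding lexIP_set_def by auto
  then have "supp_in {1..n} x"
    using assms by blast
  then have "supp_in {0..n} s" "s(0 := 0) = x" "objval n c s = objval n c x"
    unfolding s supp_in_def objval_def by (auto intro!: sum.cong)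
  then show "s \<in> L0 n c P"
    unfolding L0_def using \<open>x \<in> P\<close> s by simp
qed

lemma integral_L0_in_lexIP_set:
  assumes "\<forall>x\<in>P. supp_in {1..n} x" and "z \<in> L0 n c P" and "integral_vec n z"
  shows "z \<in> lexIP_set n c P"
proof -
  define x where "x = z(0 := 0)"
  have "x \<in> P" "supp_in {0..n} z" "z 0 = objval n c z"
    using assms(2) unfolding x_def L0_def by auto
  then have "\<forall>j. x j \<in> \<int>"
    using assms(3) unfolding x_def integral_vec_def supp_in_def
    by (metis Ints_0 atLeastAtMost_iff fun_upd_apply le0)
  moreover have "objval n c x = objval n c z"
    unfolding x_def objval_def by (auto intro!: sum.cong)
  then have "z = x(0 := objval n c x)"
    using \<open>z 0 = objval n c z\<close> unfolding x_def by auto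
  ultimately show ?thesis
    unfolding lexIP_set_def using \<open>x \<in> P\<close> by blast
qed

locale lex_cutting_plane =
  fixes n d :: nat and c a :: "nat \<Rightarrow> int" and P :: "(nat \<Rightarrow> real) set"
  assumes closed_P: "closed P"
    and P_supp: "\<forall>x\<in>P. supp_in {1..n} x"
    and P_box: "\<forall>x\<in>P. \<forall>j\<in>{1..n}. 0 \<le> x j \<and> x j \<le> real d"
    and c_nonneg: "\<forall>i\<in>{1..n}. 0 \<le> c i"
    and cut_weights: "\<forall>m\<in>{1..n}. a m = int d * (1 + (\<Sum>l=1..m-1. a l))"
    and integral_point: "\<exists>x\<in>P. \<forall>j. x j \<in> \<int>"
begin

abbreviation L :: "nat \<Rightarrow> (nat \<Rightarrow> real) set" where
  "L \<equiv> Lseq n c a P"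

abbreviation zs :: "nat \<Rightarrow> nat \<Rightarrow> real" where
  "zs t \<equiv> lexmax n (L t)"

abbreviation S :: "(nat \<Rightarrow> real) set" where
  "S \<equiv> lexIP_set n c P"

lemma L0_box: "z \<in> L0 n c P \<Longrightarrow> j \<in> {1..n} \<Longrightarrow> 0 \<le> z j \<and> z j \<le> real d"
  using P_box unfolding L0_def by fastforce

lemma L0_bounds:
  assumes "z \<in> L0 n c P" "i \<le> n"
  shows "0 \<le> z i \<and> z i \<le> real d * (1 + (\<Sum>j=1..n. c j))"
proof -
  have c: "0 \<le> (\<Sum>j=1..n. real_of_int (c j))"
    using c_nonneg by (intro sum_nonneg) auto
  have "0 \<le> z 0 \<and> z 0 \<le> (\<Sum>j=1..n. c j * real d)"
    using assms(1) L0_box c_nonneg unfolding L0_def objval_def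
    by (auto intro!: sum_nonneg sum_mono mult_left_mono mult_nonneg_nonneg)
  moreover have "(\<Sum>j=1..n. c j * real d) = real d * (\<Sum>j=1..n. c j)"
    by (simp add: sum_distrib_left mult.commute)
  ultimately show ?thesis
    using assms L0_box[of z i] c by (cases "i = 0") (auto simp: algebra_simps)
qed

lemma compact_L0: "compact (L0 n c P)"
proof -
  define B where "B = real d * (1 + (\<Sum>j=1..n. c j))"
  define box where "box = {z :: nat \<Rightarrow> real. \<forall>i. z i \<in> (if i \<le> n then {0..B} else {0})}"
  have "compact box"
    unfolding box_def by (rule compact_box) simp
  moreover have "L0 n c P \<subseteq> box"
  proof
    fix z assume z: "z \<in> L0 n c P"
    have "z i \<in> (if i \<le> n then {0..B} else {0})" for i
    proof (cases "i \<le> n")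
      case True
      then show ?thesis
        using L0_bounds[OF z] unfolding B_def by simp
    next
      case False
      then show ?thesis
        using z unfolding L0_def supp_in_def by simp
    qed
    then show "z \<in> box"
      unfolding box_def by blast
  qed
  ultimately show ?thesis
    using compact_Int_closed[OF _ closed_L0[OF closed_P]] by (metis inf.absorb_iff2)
qed

lemma lexIP_set_nonempty: "S \<noteq> {}"
  using integral_point unfolding lexIP_set_def by blast

lemma is_lexmax_Lseq_of_superset:
  assumes "S \<subseteq> L t"
  shows "is_lexmax n (L t) (zs t)"
proof (rule is_lexmax_lexmax)
  show "compact (L t)"
    using compact_Lseq[OF compact_L0] .
  show "L t \<noteq> {}"
    using assms lexIP_set_nonempty by blast
  show "\<forall>z\<in>L t. supp_in {0..n} z"
    using Lseq_subset_L0 unfolding L0_def by blast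
qed

lemma lexIP_set_subset_Lseq: "S \<subseteq> L t"
proof (induction t)
  case 0
  show ?case using lexIP_set_subset_L0[OF P_supp] by simp
next
  case (Suc t)
  have max: "is_lexmax n (L t) (zs t)"
    using is_lexmax_Lseq_of_superset[OF Suc] .
  have "y \<in> cut a (zs t) (first_frac (zs t))"
    if "y \<in> S" and "\<not> integral_vec n (zs t)" for y
  proof (rule integral_point_in_cut[OF cut_weights lexIP_set_integral[OF \<open>y \<in> S\<close>]])
    show "\<forall>j\<in>{1..n}. y j \<le> real d"
      using L0_box lexIP_set_subset_L0[OF P_supp] \<open>y \<in> S\<close> by blast
    show "\<forall>j\<in>{1..n}. 0 \<le> zs t j"
      using L0_box Lseq_subset_L0 max unfolding is_lexmax_def by blast
    show "lex_le n y (zs t)"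
      using max Suc \<open>y \<in> S\<close> unfolding is_lexmax_def by blast
  qed fact
  then show ?case
    using Suc by (auto simp: Let_def)
qed

lemma is_lexmax_Lseq: "is_lexmax n (L t) (zs t)"
  using is_lexmax_Lseq_of_superset[OF lexIP_set_subset_Lseq] .

lemma Lseq_reaches_integral: "\<exists>t. integral_vec n (zs t)"
proof (rule ccontr)
  assume none: "\<nexists>t. integral_vec n (zs t)"
  then have step: "L (Suc t) = L t \<inter> cut a (zs t) (first_frac (zs t))" for t
    by (simp add: Let_def)
  have "\<exists>t. integral_vec n (zs t)"
  proof (rule cut_sequence_reaches_integral[where zs = zs and lo = 0])
    show "lex_le n (zs (Suc t)) (zs t)" for t
      using is_lexmax_Lseq[of t] is_lexmax_Lseq[of "Suc t"] Lseq_Suc_subset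
      unfolding is_lexmax_def by blast
    show "zs (Suc t) \<in> cut a (zs t) (first_frac (zs t))" for t
      using is_lexmax_Lseq[of "Suc t"] step[of t] unfolding is_lexmax_def by blast
    show "0 \<le> zs t i" if "i \<le> n" for t i
      using is_lexmax_Lseq[of t] Lseq_subset_L0 L0_bounds that unfolding is_lexmax_def by blast
  qed
  with none show False ..
qed

theorem cutting_plane_solves:
  "\<exists>T. (\<forall>t\<le>T. \<exists>z. is_lexmax n (L t) z)
     \<and> (\<forall>t<T. \<not> integral_vec n (zs t))
     \<and> integral_vec n (zs T)
     \<and> is_lexmax n S (zs T)"
proof -
  define T where "T = (LEAST t. integral_vec n (zs t))"
  have "integral_vec n (zs T)"
    unfolding T_def using Lseq_reaches_integral by (rule LeastI_ex)
  moreover have "\<forall>t<T. \<not> integral_vec n (zs t)"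
    unfolding T_def using not_less_Least by blast
  moreover have "zs T \<in> S"
    using integral_L0_in_lexIP_set[OF P_supp] is_lexmax_Lseq[of T] Lseq_subset_L0
      \<open>integral_vec n (zs T)\<close> unfolding is_lexmax_def by blast
  then have "is_lexmax n S (zs T)"
    using is_lexmax_Lseq[of T] lexIP_set_subset_Lseq unfolding is_lexmax_def by blast
  ultimately show ?thesis
    using is_lexmax_Lseq by blast
qed

end

theorem theorem1:
  fixes n d m :: nat and c a :: "nat \<Rightarrow> int"
    and A :: "nat \<Rightarrow> nat \<Rightarrow> real" and b :: "nat \<Rightarrow> real"
  assumes "n > 0" and "d > 0"
    and "\<forall>i\<in>{1..n}. c i \<ge> 0"
    and "\<forall>x\<in>polyhedron n m A b. \<forall>j\<in>{1..n}. 0 \<le> x j \<and> x j \<le> real d"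
    and "\<exists>x\<in>polyhedron n m A b. \<forall>j. x j \<in> \<int>"
    and "a 1 = int d"
    and "\<forall>k\<in>{2..n}. a k = int d * (1 + (\<Sum>j=1..k-1. a j))"
  shows "\<exists>T. (\<forall>t\<le>T. \<exists>z. is_lexmax n (Lseq n c a (polyhedron n m A b) t) z)
           \<and> (\<forall>t<T. \<not> integral_vec n (lexmax n (Lseq n c a (polyhedron n m A b) t)))
           \<and> integral_vec n (lexmax n (Lseq n c a (polyhedron n m A b) T))
           \<and> is_lexmax n (lexIP_set n c (polyhedron n m A b))
                (lexmax n (Lseq n c a (polyhedron n m A b) T))"
proof -
  have "\<forall>k\<in>{1..n}. a k = int d * (1 + (\<Sum>j=1..k-1. a j))"
  proof
    fix k assume "k \<in> {1..n}"
    then consider "k = 1" | "k \<in> {2..n}"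
      by fastforce
    then show "a k = int d * (1 + (\<Sum>j=1..k-1. a j))"
      using assms(6,7) by cases auto
  qed
  then interpret lex_cutting_plane n d c a "polyhedron n m A b"
    using closed_polyhedron assms(3-5) by unfold_locales (auto simp: polyhedron_def)
  show ?thesis
    by (rule cutting_plane_solves)
qed

end
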